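(* Let $m>1$, $h>0$, $\Delta t>0$, let $M^*,S^*\in\mathbb{R}^{(m-1)\times(m-1)}$ be symmetric matrices and let $F\in\mathbb{R}^{m-1}$ be independent of time. Let $(U^n,\dot U^n,\ddot U^n)_{n\ge0}$ be sequences in $\mathbb{R}^{m-1}$ satisfying, for all $n\ge0$, the hybrid scheme $$U^{n+1}=U^n+\tfrac{\Delta t}{2}(\dot U^{n+1}+\dot U^n),\qquad \dot U^{n+1}=\dot U^n+\tfrac{\Delta t}{2}(\ddot U^{n+1}+\ddot U^n),$$ $$M^*\ddot U^{n+\frac12}+S^*U^{n+\frac12}=F+\frac{H(-u_1^n)}{2h}(u_1^n+u_1^{n+1})^+e_1+\frac{H(u_1^n)}{2h}\big((u_1^n)^++(u_1^{n+1})^+\big)e_1,$$ where $V^{n+\frac12}=\frac12(V^{n+1}+V^n)$, $u_1^n$ is the first component of $U^n$, $e_1=(1,0,\dots,0)^{\mathsf T}$, $s^+=\max(s,0)$, and $H(s)=1$ if $s>0$, $H(0)=\tfrac12$, $H(s)=0$ if $s<0$. Define the discrete energy $$\mathcal{E}^n=\tfrac12(\dot U^n)^{\mathsf T}M^*\dot U^n+\tfrac12(U^n)^{\mathsf T}S^*U^n-\tfrac1{2h}\big((u_1^n)^+\big)^2-(U^n)^{\mathsf T}F .$$ Then $\Delta\mathcal{E}^n:=\mathcal{E}^{n+1}-\mathcal{E}^n\le0$ for all $n>0$.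
   Context: In the paper, $M^*$ and $S^*$ are the (symmetric) reduced mass and stiffness matrices of a mass-redistributed $P_1$ finite element discretization of the 1D wave equation with a Signorini contact condition, the contact node having been eliminated; the claim only uses their symmetry. *)

theory Defs
  imports Main "HOL-Analysis.Analysis"
begin

text \<open>Vectors in R^(m-1) are represented as functions nat => real with index set {..<m-1};
 index 0 is the first component. Matrices are nat => nat => real.\<close>

definition pos_part :: "real \<Rightarrow> real" where
  "pos_part s = max s 0"

definition heaviside :: "real \<Rightarrow> real" where
  "heaviside s = (if s > 0 then 1 else if s = 0 then 1/2 else 0)"

definition mat_vec :: "nat \<Rightarrow> (nat \<Rightarrow> nat \<Rightarrow> real) \<Rightarrow> (nat \<Rightarrow> real) \<Rightarrow> nat \<Rightarrow> real" where
  "mat_vec d A x i = (\<Sum>j<d. A i j * x j)"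

definition dotp :: "nat \<Rightarrow> (nat \<Rightarrow> real) \<Rightarrow> (nat \<Rightarrow> real) \<Rightarrow> real" where
  "dotp d x y = (\<Sum>i<d. x i * y i)"

definition quad_form :: "nat \<Rightarrow> (nat \<Rightarrow> nat \<Rightarrow> real) \<Rightarrow> (nat \<Rightarrow> real) \<Rightarrow> real" where
  "quad_form d A x = dotp d x (mat_vec d A x)"

definition symmetric_mat :: "nat \<Rightarrow> (nat \<Rightarrow> nat \<Rightarrow> real) \<Rightarrow> bool" where
  "symmetric_mat d A \<longleftrightarrow> (\<forall>i<d. \<forall>j<d. A i j = A j i)"

definition disc_energy ::
  "nat \<Rightarrow> real \<Rightarrow> (nat \<Rightarrow> nat \<Rightarrow> real) \<Rightarrow> (nat \<Rightarrow> nat \<Rightarrow> real) \<Rightarrow> (nat \<Rightarrow> real)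
   \<Rightarrow> (nat \<Rightarrow> real) \<Rightarrow> (nat \<Rightarrow> real) \<Rightarrow> real" where
  "disc_energy d h M S F U Ud =
     quad_form d M Ud / 2 + quad_form d S U / 2 - (pos_part (U 0))\<^sup>2 / (2 * h) - dotp d U F"

end

theory Submission
  imports Defs
begin

text \<open>Pairing the scheme with the increment U^{n+1} - U^n, the trapezoidal updates make the
  mass and stiffness contributions telescope exactly into the change of the kinetic and elastic
  energy, while the load term gives the change of (U^n)^T F. What remains is the work of the
  contact force, (u_1^{n+1} - u_1^n) times the right-hand side's first entry, against the change of
  the penalty energy ((u_1^n)^+)^2/(2h); a case distinction on the signs of u_1^n and u_1^{n+1}
  shows the former never exceeds the latter.\<close>

lemma dotp_cong:
  "(\<And>i. i < d \<Longrightarrow> x i = x' i) \<Longrightarrow> (\<And>i. i < d \<Longrightarrow> y i = y' i) \<Longrightarrow> dotp d x y = dotp d x' y'"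
  unfolding dotp_def by (rule sum.cong) auto

lemma mat_vec_cong: "(\<And>i. i < d \<Longrightarrow> x i = x' i) \<Longrightarrow> mat_vec d A x k = mat_vec d A x' k"
  unfolding mat_vec_def by (rule sum.cong) auto

lemma mat_vec_scale: "mat_vec d A (\<lambda>j. c * x j) k = c * mat_vec d A x k"
  unfolding mat_vec_def by (simp add: sum_distrib_left mult_ac)

lemma dotp_scale_left: "dotp d (\<lambda>i. c * x i) y = c * dotp d x y"
  unfolding dotp_def by (simp add: sum_distrib_left mult_ac)

lemma dotp_scale_right: "dotp d x (\<lambda>i. c * y i) = c * dotp d x y"
  unfolding dotp_def by (simp add: sum_distrib_left mult_ac)

lemma dotp_add_right: "dotp d x (\<lambda>i. y i + z i) = dotp d x y + dotp d x z"
  unfolding dotp_def by (simp add: algebra_simps sum.distrib)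

lemma dotp_diff_left: "dotp d (\<lambda>i. x i - y i) z = dotp d x z - dotp d y z"
  unfolding dotp_def by (simp add: algebra_simps sum_subtractf)

lemma dotp_unit_right:
  assumes "0 < d"
  shows "dotp d x (\<lambda>i. if i = 0 then c else 0) = x 0 * c"
  unfolding dotp_def using assms by (simp add: if_distrib sum.delta cong: if_cong)

lemma dotp_mat_vec_commute:
  assumes "symmetric_mat d A"
  shows "dotp d x (mat_vec d A y) = dotp d y (mat_vec d A x)"
proof -
  have "dotp d x (mat_vec d A y) = (\<Sum>i<d. \<Sum>j<d. x i * A i j * y j)"
    unfolding dotp_def mat_vec_def by (simp add: sum_distrib_left mult.assoc)
  also have "\<dots> = (\<Sum>j<d. \<Sum>i<d. x i * A i j * y j)" by (rule sum.swap)
  also have "\<dots> = (\<Sum>j<d. \<Sum>i<d. y j * A j i * x i)"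
    using assms unfolding symmetric_mat_def by (intro sum.cong refl) (auto simp: mult_ac)
  also have "\<dots> = dotp d y (mat_vec d A x)"
    unfolding dotp_def mat_vec_def by (simp add: sum_distrib_left mult.assoc)
  finally show ?thesis .
qed

lemma quad_form_diff:
  assumes "symmetric_mat d A"
  shows "quad_form d A x - quad_form d A y = dotp d (\<lambda>i. x i - y i) (mat_vec d A (\<lambda>i. x i + y i))"
proof -
  have "mat_vec d A (\<lambda>i. x i + y i) = (\<lambda>k. mat_vec d A x k + mat_vec d A y k)"
    unfolding mat_vec_def by (simp add: algebra_simps sum.distrib)
  then show ?thesis
    using dotp_mat_vec_commute[OF assms, of x y]
    by (simp add: quad_form_def dotp_diff_left dotp_add_right)
qed

lemma newmark_energy_identity:
  assumes symM: "symmetric_mat d M" and symS: "symmetric_mat d S"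
    and upd_x: "\<And>i. i < d \<Longrightarrow> x' i = x i + dt / 2 * (v' i + v i)"
    and upd_v: "\<And>i. i < d \<Longrightarrow> v' i = v i + dt / 2 * (w' i + w i)"
  shows "(quad_form d M v' + quad_form d S x') / 2 - (quad_form d M v + quad_form d S x) / 2
       = dotp d (\<lambda>i. x' i - x i)
           (\<lambda>i. mat_vec d M (\<lambda>j. (w' j + w j) / 2) i + mat_vec d S (\<lambda>j. (x' j + x j) / 2) i)"
proof -
  define Mw where "Mw = mat_vec d M (\<lambda>j. (w' j + w j) / 2)"
  define Sx where "Sx = mat_vec d S (\<lambda>j. (x' j + x j) / 2)"
  have "quad_form d M v' - quad_form d M v = dotp d (\<lambda>i. v' i + v i) (mat_vec d M (\<lambda>i. v' i - v i))"
    using quad_form_diff[OF symM] dotp_mat_vec_commute[OF symM] by metis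
  also have "mat_vec d M (\<lambda>i. v' i - v i) = (\<lambda>k. dt * Mw k)"
    unfolding Mw_def using upd_v
    by (subst mat_vec_scale[symmetric]) (auto intro!: mat_vec_cong)
  also have "dotp d (\<lambda>i. v' i + v i) (\<lambda>k. dt * Mw k) = 2 * dotp d (\<lambda>i. x' i - x i) Mw"
    using upd_x by (simp add: dotp_scale_right dotp_scale_left[symmetric] cong: dotp_cong)
  finally have kinetic: "quad_form d M v' - quad_form d M v = 2 * dotp d (\<lambda>i. x' i - x i) Mw" .
  have "mat_vec d S (\<lambda>i. x' i + x i) = (\<lambda>k. 2 * Sx k)"
    unfolding Sx_def by (subst mat_vec_scale[symmetric]) (auto intro!: mat_vec_cong)
  then have elastic: "quad_form d S x' - quad_form d S x = 2 * dotp d (\<lambda>i. x' i - x i) Sx"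
    using quad_form_diff[OF symS] by (simp add: dotp_scale_right)
  show ?thesis
    using kinetic elastic by (simp add: dotp_add_right Mw_def Sx_def field_simps)
qed

lemma contact_work_le_penalty_change:
  fixes a b h :: real
  assumes "h > 0"
  shows "(a - b) * (heaviside (- b) / (2 * h) * pos_part (b + a)
            + heaviside b / (2 * h) * (pos_part b + pos_part a))
         \<le> ((pos_part a)\<^sup>2 - (pos_part b)\<^sup>2) / (2 * h)"
proof -
  have "(a - b) * (heaviside (- b) * pos_part (b + a) + heaviside b * (pos_part b + pos_part a))
         \<le> (pos_part a)\<^sup>2 - (pos_part b)\<^sup>2"
    unfolding heaviside_def pos_part_def
    by (cases "b > 0"; cases "b = 0"; cases "a > 0"; cases "a + b > 0")
       (auto simp: max_def power2_eq_square algebra_simps mult_nonpos_nonneg)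
  then have "(a - b) * (heaviside (- b) * pos_part (b + a) + heaviside b * (pos_part b + pos_part a))
         / (2 * h) \<le> ((pos_part a)\<^sup>2 - (pos_part b)\<^sup>2) / (2 * h)"
    using assms by (simp add: divide_right_mono)
  moreover have "(a - b) * (heaviside (- b) / (2 * h) * pos_part (b + a)
            + heaviside b / (2 * h) * (pos_part b + pos_part a))
      = (a - b) * (heaviside (- b) * pos_part (b + a) + heaviside b * (pos_part b + pos_part a))
         / (2 * h)"
    using assms by (simp add: field_simps)
  ultimately show ?thesis
    by simp
qed

theorem lemma5p1:
  fixes m :: nat and h dt :: real
    and M S :: "nat \<Rightarrow> nat \<Rightarrow> real" and F :: "nat \<Rightarrow> real"
    and U Ud Udd :: "nat \<Rightarrow> nat \<Rightarrow> real"
  assumes "m > 1" and "h > 0" and "dt > 0"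
    and "symmetric_mat (m - 1) M" and "symmetric_mat (m - 1) S"
    and upd_U: "\<And>n i. i < m - 1 \<Longrightarrow> U (Suc n) i = U n i + dt / 2 * (Ud (Suc n) i + Ud n i)"
    and upd_Ud: "\<And>n i. i < m - 1 \<Longrightarrow> Ud (Suc n) i = Ud n i + dt / 2 * (Udd (Suc n) i + Udd n i)"
    and eqn: "\<And>n i. i < m - 1 \<Longrightarrow>
       mat_vec (m - 1) M (\<lambda>j. (Udd (Suc n) j + Udd n j) / 2) i
       + mat_vec (m - 1) S (\<lambda>j. (U (Suc n) j + U n j) / 2) i
       = F i + (if i = 0 then
            heaviside (- U n 0) / (2 * h) * pos_part (U n 0 + U (Suc n) 0)
            + heaviside (U n 0) / (2 * h) * (pos_part (U n 0) + pos_part (U (Suc n) 0))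
          else 0)"
  shows "\<forall>n>0. disc_energy (m - 1) h M S F (U (Suc n)) (Ud (Suc n))
               - disc_energy (m - 1) h M S F (U n) (Ud n) \<le> 0"
proof (intro allI impI)
  fix n :: nat
  let ?d = "m - 1" and ?x = "U n" and ?x' = "U (Suc n)"
  define R where "R = heaviside (- ?x 0) / (2 * h) * pos_part (?x 0 + ?x' 0)
            + heaviside (?x 0) / (2 * h) * (pos_part (?x 0) + pos_part (?x' 0))"
  have "(quad_form ?d M (Ud (Suc n)) + quad_form ?d S ?x') / 2
          - (quad_form ?d M (Ud n) + quad_form ?d S ?x) / 2
        = dotp ?d (\<lambda>i. ?x' i - ?x i)
            (\<lambda>i. mat_vec ?d M (\<lambda>j. (Udd (Suc n) j + Udd n j) / 2) i
                 + mat_vec ?d S (\<lambda>j. (?x' j + ?x j) / 2) i)"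
    by (rule newmark_energy_identity[OF assms(4,5) upd_U upd_Ud])
  also have "\<dots> = dotp ?d (\<lambda>i. ?x' i - ?x i) (\<lambda>i. F i + (if i = 0 then R else 0))"
    unfolding R_def by (rule dotp_cong) (simp_all only: eqn)
  also have "\<dots> = dotp ?d ?x' F - dotp ?d ?x F + (?x' 0 - ?x 0) * R"
    using \<open>m > 1\<close> by (simp add: dotp_add_right dotp_diff_left dotp_unit_right left_diff_distrib)
  finally have "disc_energy ?d h M S F ?x' (Ud (Suc n)) - disc_energy ?d h M S F ?x (Ud n)
      = (?x' 0 - ?x 0) * R - ((pos_part (?x' 0))\<^sup>2 - (pos_part (?x 0))\<^sup>2) / (2 * h)"
    unfolding disc_energy_def by (simp add: add_divide_distrib diff_divide_distrib)
  also have "\<dots> \<le> 0"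
    using contact_work_le_penalty_change[OF \<open>h > 0\<close>] by (simp add: R_def)
  finally show "disc_energy ?d h M S F ?x' (Ud (Suc n)) - disc_energy ?d h M S F ?x (Ud n) \<le> 0" .
qed

end
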